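(* Let Assumptions 1 and 2 (stated in the context) hold. Then there exists a finite constant $\bar C$, depending only on $\zeta=(c_f,c_W,C_F,C_T,w_1,w_2,x_1,x_2,\tilde x_1,\tilde x_2)$, such that $$\|h\|_{2,t}\le \bar C\,\|Th\|_2\qquad\text{for every } h\in\mathcal M.$$
   Context: Let $(X,W)$ be a random pair with values in $[0,1]^2$; $F_{X|W}(x|w)$, $f_{X|W}(x|w)$, $f_{X,W}$, $f_W$ denote the conditional distribution function of $X$ given $W=w$, the conditional density, the joint density and the marginal density of $W$. Fix constants $0\le x_1<\tilde x_1<\tilde x_2<x_2\le1$ and $0<w_1<w_2<1$. "Increasing" means non-decreasing and "decreasing" means non-increasing. Assumption 1 (Monotone IV): (a) for all $x,w',w''\in(0,1)$ with $w'\le w''$, $F_{X|W}(x|w')\ge F_{X|W}(x|w'')$; (b) there is a constant $C_F>1$ such that $F_{X|W}(x|w_1)\ge C_F F_{X|W}(x|w_2)$ for all $x\in(0,x_2)$, and $C_F(1-F_{X|W}(x|w_1))\le 1-F_{X|W}(x|w_2)$ for all $x\in(x_1,1)$. Assumption 2 (Density): (i) $(X,W)$ has a density $f_{X,W}$ with respect to Lebesgue measure on $[0,1]^2$ with $\int_0^1\int_0^1 f_{X,W}(x,w)^2\,dx\,dw\le C_T$ for a finite constant $C_T$; (ii) there is $c_f>0$ with $f_{X|W}(x|w)\ge c_f$ for all $x\in[x_1,x_2]$ and $w\in\{w_1,w_2\}$; (iii) there are constants $0<c_W\le C_W<\infty$ with $c_W\le f_W(w)\le C_W$ for all $w\in[0,1]$.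 The operator $T:L^2[0,1]\to L^2[0,1]$ is $(Th)(w)=E[h(X)\mid W=w]f_W(w)=\int_0^1 h(x)f_{X,W}(x,w)\,dx$. The truncated norm is $\|h\|_{2,t}=\big(\int_{\tilde x_1}^{\tilde x_2}h(x)^2dx\big)^{1/2}$, and $\|\cdot\|_2$ is the usual norm of $L^2[0,1]$. $\mathcal M$ denotes the set of all monotone (increasing or decreasing) functions in $L^2[0,1]$. *)

theory Defs
  imports "HOL-Analysis.Analysis"
begin

text \<open>The joint density of (X,W) on the unit square is a function f with f x w = f_{X,W}(x,w).\<close>

definition fW :: "(real \<Rightarrow> real \<Rightarrow> real) \<Rightarrow> real \<Rightarrow> real" where
  "fW f w = (LINT x:{0..1}|lborel. f x w)"

definition condCDF :: "(real \<Rightarrow> real \<Rightarrow> real) \<Rightarrow> real \<Rightarrow> real \<Rightarrow> real" where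
  "condCDF f x w = (LINT t:{0..x}|lborel. f t w) / fW f w"

definition condDens :: "(real \<Rightarrow> real \<Rightarrow> real) \<Rightarrow> real \<Rightarrow> real \<Rightarrow> real" where
  "condDens f x w = f x w / fW f w"

definition opT :: "(real \<Rightarrow> real \<Rightarrow> real) \<Rightarrow> (real \<Rightarrow> real) \<Rightarrow> real \<Rightarrow> real" where
  "opT f h w = (LINT x:{0..1}|lborel. h x * f x w)"

definition norm2 :: "(real \<Rightarrow> real) \<Rightarrow> real" where
  "norm2 g = sqrt (LINT x:{0..1}|lborel. (g x)\<^sup>2)"

definition norm2t :: "real \<Rightarrow> real \<Rightarrow> (real \<Rightarrow> real) \<Rightarrow> real" where
  "norm2t a b h = sqrt (LINT x:{a..b}|lborel. (h x)\<^sup>2)"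

definition L2_01 :: "(real \<Rightarrow> real) set" where
  "L2_01 = {h. h \<in> borel_measurable lborel \<and> set_integrable lborel {0..1} (\<lambda>x. (h x)\<^sup>2)}"

definition monoL2 :: "(real \<Rightarrow> real) set" where
  "monoL2 = {h. h \<in> L2_01 \<and> (mono_on {0<..<1} h \<or> antimono_on {0<..<1} h)}"

definition monotone_IV :: "(real \<Rightarrow> real \<Rightarrow> real) \<Rightarrow> real \<Rightarrow> real \<Rightarrow> real \<Rightarrow> real \<Rightarrow> real \<Rightarrow> bool" where
  "monotone_IV f C_F x1 x2 w1 w2 \<longleftrightarrow>
     (\<forall>x w' w''. x \<in> {0<..<1} \<and> w' \<in> {0<..<1} \<and> w'' \<in> {0<..<1} \<and> w' \<le> w''
        \<longrightarrow> condCDF f x w' \<ge> condCDF f x w'') \<and>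
     1 < C_F \<and>
     (\<forall>x\<in>{0<..<x2}. condCDF f x w1 \<ge> C_F * condCDF f x w2) \<and>
     (\<forall>x\<in>{x1<..<1}. C_F * (1 - condCDF f x w1) \<le> 1 - condCDF f x w2)"

definition density_assm :: "(real \<Rightarrow> real \<Rightarrow> real) \<Rightarrow> real \<Rightarrow> real \<Rightarrow> real \<Rightarrow> real
     \<Rightarrow> real \<Rightarrow> real \<Rightarrow> real \<Rightarrow> real \<Rightarrow> bool" where
  "density_assm f C_T c_f c_W C_W x1 x2 w1 w2 \<longleftrightarrow>
     (\<lambda>(x, w). f x w) \<in> borel_measurable (lborel \<Otimes>\<^sub>M lborel) \<and>
     (\<forall>x\<in>{0..1}. \<forall>w\<in>{0..1}. 0 \<le> f x w) \<and>
     (\<integral>\<^sup>+ z \<in> {0..1} \<times> {0..1}. ennreal (case z of (x, w) \<Rightarrow> f x w) \<partial>(lborel \<Otimes>\<^sub>M lborel)) = 1 \<and>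
     (\<integral>\<^sup>+ z \<in> {0..1} \<times> {0..1}. ennreal ((case z of (x, w) \<Rightarrow> f x w)\<^sup>2) \<partial>(lborel \<Otimes>\<^sub>M lborel))
        \<le> ennreal C_T \<and>
     0 < c_f \<and>
     (\<forall>x\<in>{x1..x2}. \<forall>w\<in>{w1, w2}. condDens f x w \<ge> c_f) \<and>
     0 < c_W \<and> c_W \<le> C_W \<and>
     (\<forall>w\<in>{0..1}. c_W \<le> fW f w \<and> fW f w \<le> C_W)"

end

theory Submission
  imports Defs
begin

text \<open>
  Let \<open>h\<close> be increasing (for decreasing \<open>h\<close> pass to \<open>-h\<close>) and write \<open>h = h(xt1) + P - Q\<close> with
  \<open>P = (h - h(xt1))\<^sup>+\<close> and \<open>Q = (h - h(xt1))\<^sup>-\<close>. The level sets of \<open>P\<close> and \<open>Q\<close> are intervals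
  \<open>(a, 1]\<close> and \<open>[0, a]\<close>, so by the layer-cake formula their conditional means given \<open>W = w\<close> can be
  compared through the conditional distribution function: Assumption 1(a) makes \<open>E[P|w]\<close>
  increasing and \<open>E[Q|w]\<close> decreasing, hence \<open>g(w) = E[h(X)|W = w]\<close> increasing, and Assumption 1(b)
  gives \<open>C_F E[P|w1] \<le> E[P|w2]\<close> and \<open>C_F E[Q|w2] \<le> E[Q|w1]\<close>. With \<open>K = max (g(w2)\<^sup>+) (g(w1)\<^sup>-)\<close>
  these bound \<open>E[P|w2]\<close>, \<open>E[Q|w2]\<close> and thus \<open>|h(xt1)|\<close> by multiples of \<open>K\<close>, and the density bound
  \<open>c_f\<close> on \<open>(xt2, x2)\<close> turns the bound on \<open>E[P|w2]\<close> into one on \<open>h(xt2) - h(xt1)\<close>. So \<open>|h| \<le> L K\<close> for a constant \<open>L\<close>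
  on \<open>[xt1, xt2]\<close>. On the other hand \<open>Th = f_W g\<close> with \<open>g\<close> monotone, so \<open>|Th| \<ge> c_W K\<close> on
  \<open>(w2, 1)\<close> or on \<open>(0, w1)\<close>.

  None of the conditional means is assumed finite: \<open>T|h|\<close> is finite almost everywhere because
  \<open>h\<close> and the density are square integrable, and the monotonicity in \<open>w\<close> spreads finiteness to
  every \<open>w \<in> (0, 1)\<close>.
\<close>

section \<open>Layer-cake comparison\<close>

lemma nn_integral_layer_cake:
  fixes psi :: "real \<Rightarrow> real" and g :: "real \<Rightarrow> ennreal"
  assumes [measurable]: "psi \<in> borel_measurable lborel" "g \<in> borel_measurable lborel"
  shows "(\<integral>\<^sup>+x. ennreal (psi x) * g x \<partial>lborel) =
         (\<integral>\<^sup>+s. indicator {0<..} s * (\<integral>\<^sup>+x. indicator {x. s < psi x} x * g x \<partial>lborel) \<partial>lborel)"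
proof -
  have psi_eq: "ennreal (psi x) = (\<integral>\<^sup>+s. indicator {0<..<psi x} s \<partial>lborel)" for x
    by (cases "0 \<le> psi x") (auto simp: ennreal_neg)
  have [measurable]: "(\<lambda>z. g (snd z)) \<in> borel_measurable (lborel \<Otimes>\<^sub>M lborel)"
    by (rule measurable_compose[OF measurable_snd]) simp
  have "(\<lambda>(s, x). indicator {0<..<psi x} s * g x) =
        (\<lambda>z. (if 0 < fst z \<and> fst z < psi (snd z) then 1 else 0) * g (snd z))"
    by (auto simp: indicator_def fun_eq_iff)
  then have joint_meas: "(\<lambda>(s, x). indicator {0<..<psi x} s * g x) \<in> borel_measurable (lborel \<Otimes>\<^sub>M lborel)"
    by simp
  have "(\<integral>\<^sup>+x. ennreal (psi x) * g x \<partial>lborel) =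
        (\<integral>\<^sup>+x. (\<integral>\<^sup>+s. indicator {0<..<psi x} s * g x \<partial>lborel) \<partial>lborel)"
    by (simp add: psi_eq nn_integral_multc)
  also have "\<dots> = (\<integral>\<^sup>+s. (\<integral>\<^sup>+x. indicator {0<..<psi x} s * g x \<partial>lborel) \<partial>lborel)"
    by (rule lborel_pair.Fubini'[OF joint_meas])
  also have "\<dots> = (\<integral>\<^sup>+s. indicator {0<..} s * (\<integral>\<^sup>+x. indicator {x. s < psi x} x * g x \<partial>lborel) \<partial>lborel)"
    by (intro nn_integral_cong, rename_tac s, case_tac "0 < s")
      (auto simp: indicator_def intro!: nn_integral_cong)
  finally show ?thesis .
qed

lemma nn_integral_layer_cake_mono:
  fixes psi :: "real \<Rightarrow> real" and g1 g2 :: "real \<Rightarrow> ennreal"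
  assumes [measurable]: "psi \<in> borel_measurable lborel"
    "g1 \<in> borel_measurable lborel" "g2 \<in> borel_measurable lborel"
    and level: "\<And>s. 0 < s \<Longrightarrow> A * (\<integral>\<^sup>+x. indicator {x. s < psi x} x * g1 x \<partial>lborel)
                              \<le> B * (\<integral>\<^sup>+x. indicator {x. s < psi x} x * g2 x \<partial>lborel)"
  shows "A * (\<integral>\<^sup>+x. ennreal (psi x) * g1 x \<partial>lborel) \<le> B * (\<integral>\<^sup>+x. ennreal (psi x) * g2 x \<partial>lborel)"
proof -
  have "A * (\<integral>\<^sup>+x. ennreal (psi x) * g1 x \<partial>lborel) =
     (\<integral>\<^sup>+s. A * (indicator {0<..} s * (\<integral>\<^sup>+x. indicator {x. s < psi x} x * g1 x \<partial>lborel)) \<partial>lborel)"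
    by (simp add: nn_integral_layer_cake nn_integral_cmult)
  also have "\<dots> \<le> (\<integral>\<^sup>+s. B * (indicator {0<..} s * (\<integral>\<^sup>+x. indicator {x. s < psi x} x * g2 x \<partial>lborel)) \<partial>lborel)"
    by (intro nn_integral_mono, rename_tac s, case_tac "0 < s") (auto simp: level)
  also have "\<dots> = B * (\<integral>\<^sup>+x. ennreal (psi x) * g2 x \<partial>lborel)"
    by (simp add: nn_integral_layer_cake nn_integral_cmult)
  finally show ?thesis .
qed

lemma upclosed_AE_eq_greaterThanAtMost:
  fixes S :: "real set"
  assumes up: "\<And>x y. x \<in> S \<Longrightarrow> 0 < x \<Longrightarrow> x \<le> y \<Longrightarrow> y < 1 \<Longrightarrow> y \<in> S"
  obtains a where "0 \<le> a" "a \<le> 1" "\<And>x. x \<in> {0<..<1} - S \<Longrightarrow> x \<le> a"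
    "AE x in lborel. (indicator (S \<inter> {0..1}) x :: ennreal) = indicator {a<..1} x"
proof (cases "S \<inter> {0<..<1} = {}")
  case True
  have "AE x in lborel. (indicator (S \<inter> {0..1}) x :: ennreal) = indicator {1<..1} x"
    using AE_lborel_singleton[of 0] AE_lborel_singleton[of 1]
    by eventually_elim (use True in \<open>auto simp: indicator_def\<close>)
  then show ?thesis by (intro that[of 1]) auto
next
  case False
  define V where "V = S \<inter> {0<..<1}"
  define a where "a = Inf V"
  have bdd: "bdd_below V" unfolding V_def by (auto intro!: bdd_belowI[of _ 0])
  have a0: "0 \<le> a" unfolding a_def V_def using False by (intro cInf_greatest) auto
  have below: "a \<le> v" if "v \<in> V" for v unfolding a_def by (rule cInf_lower[OF that bdd])
  have above: "x \<in> S" if x: "a < x" "x < 1" for x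
  proof -
    obtain v where "v \<in> V" "v < x"
      using cInf_less_iff[OF False[folded V_def] bdd, of x] x by (auto simp: a_def)
    then show ?thesis using up[of v x] x unfolding V_def by auto
  qed
  have a1: "a \<le> 1" using False below unfolding V_def by force
  have "x \<le> a" if "x \<in> {0<..<1} - S" for x
    using above[of x] that by force
  moreover have "AE x in lborel. (indicator (S \<inter> {0..1}) x :: ennreal) = indicator {a<..1} x"
    using AE_lborel_singleton[of 0] AE_lborel_singleton[of 1] AE_lborel_singleton[of a]
  proof eventually_elim
    case (elim x)
    then have "x \<in> S \<inter> {0..1} \<longleftrightarrow> x \<in> {a<..1}"
      using above[of x] below[of x] a0 unfolding V_def by force
    then show ?case by (simp add: indicator_def)
  qed
  ultimately show ?thesis using a0 a1 by (intro that) auto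
qed

lemma downclosed_AE_eq_atLeastAtMost:
  fixes S :: "real set"
  assumes down: "\<And>x y. x \<in> S \<Longrightarrow> x < 1 \<Longrightarrow> y \<le> x \<Longrightarrow> 0 < y \<Longrightarrow> y \<in> S"
  obtains a where "0 \<le> a" "a \<le> 1" "\<And>x. x \<in> {0<..<1} - S \<Longrightarrow> a \<le> x"
    "AE x in lborel. (indicator (S \<inter> {0..1}) x :: ennreal) = indicator {0..a} x"
proof (cases "S \<inter> {0<..<1} = {}")
  case True
  have "AE x in lborel. (indicator (S \<inter> {0..1}) x :: ennreal) = indicator {0..0} x"
    using AE_lborel_singleton[of 0] AE_lborel_singleton[of 1]
    by eventually_elim (use True in \<open>auto simp: indicator_def\<close>)
  then show ?thesis by (intro that[of 0]) auto
next
  case False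
  define V where "V = S \<inter> {0<..<1}"
  define a where "a = Sup V"
  have bdd: "bdd_above V" unfolding V_def by (auto intro!: bdd_aboveI[of _ 1])
  have a1: "a \<le> 1" unfolding a_def V_def using False by (intro cSup_least) auto
  have above: "v \<le> a" if "v \<in> V" for v unfolding a_def by (rule cSup_upper[OF that bdd])
  have below: "x \<in> S" if x: "x < a" "0 < x" for x
  proof -
    obtain v where "v \<in> V" "x < v"
      using less_cSup_iff[OF False[folded V_def] bdd, of x] x by (auto simp: a_def)
    then show ?thesis using down[of v x] x unfolding V_def by auto
  qed
  have a0: "0 \<le> a" using False above unfolding V_def by force
  have "a \<le> x" if "x \<in> {0<..<1} - S" for x
    using below[of x] that by force
  moreover have "AE x in lborel. (indicator (S \<inter> {0..1}) x :: ennreal) = indicator {0..a} x"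
    using AE_lborel_singleton[of 0] AE_lborel_singleton[of 1] AE_lborel_singleton[of a]
  proof eventually_elim
    case (elim x)
    then have "x \<in> S \<inter> {0..1} \<longleftrightarrow> x \<in> {0..a}"
      using below[of x] above[of x] a1 unfolding V_def by force
    then show ?case by (simp add: indicator_def)
  qed
  ultimately show ?thesis using a0 a1 by (intro that) auto
qed

section \<open>Positive and negative parts of a monotone function\<close>

definition excess :: "(real \<Rightarrow> real) \<Rightarrow> real \<Rightarrow> real \<Rightarrow> real" where
  "excess h c x = max 0 (h x - h c)"

definition shortfall :: "(real \<Rightarrow> real) \<Rightarrow> real \<Rightarrow> real \<Rightarrow> real" where
  "shortfall h c x = max 0 (h c - h x)"

lemma excess_nonneg: "0 \<le> excess h c x" and shortfall_nonneg: "0 \<le> shortfall h c x"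
  by (simp_all add: excess_def shortfall_def)

lemma measurable_excess_shortfall [measurable]:
  assumes [measurable]: "h \<in> borel_measurable lborel"
  shows "excess h c \<in> borel_measurable lborel" "shortfall h c \<in> borel_measurable lborel"
  unfolding excess_def shortfall_def by measurable

lemma excess_level_set_AE:
  assumes mono: "mono_on {0<..<1} h" and c: "c \<in> {0<..<1}" and s: "0 < s"
  obtains a where "c \<le> a" "a \<le> 1"
    "AE x in lborel. (indicator ({x. s < excess h c x} \<inter> {0..1}) x :: ennreal) = indicator {a<..1} x"
proof -
  define S where "S = {x. s < excess h c x}"
  have up: "y \<in> S" if "x \<in> S" "0 < x" "x \<le> y" "y < 1" for x y
    using mono_onD[OF mono, of x y] that by (auto simp: S_def excess_def)
  obtain a where "0 \<le> a" "a \<le> 1" "\<And>x. x \<in> {0<..<1} - S \<Longrightarrow> x \<le> a"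
    and "AE x in lborel. (indicator (S \<inter> {0..1}) x :: ennreal) = indicator {a<..1} x"
    using upclosed_AE_eq_greaterThanAtMost[of S] up by metis
  moreover have "c \<notin> S" using s by (simp add: S_def excess_def)
  ultimately show thesis using c by (intro that[of a]) (auto simp: S_def)
qed

lemma shortfall_level_set_AE:
  assumes mono: "mono_on {0<..<1} h" and c: "c \<in> {0<..<1}" and s: "0 < s"
  obtains a where "0 \<le> a" "a \<le> c"
    "AE x in lborel. (indicator ({x. s < shortfall h c x} \<inter> {0..1}) x :: ennreal) = indicator {0..a} x"
proof -
  define S where "S = {x. s < shortfall h c x}"
  have down: "y \<in> S" if "x \<in> S" "x < 1" "y \<le> x" "0 < y" for x y
    using mono_onD[OF mono, of y x] that by (auto simp: S_def shortfall_def)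
  obtain a where "0 \<le> a" "a \<le> 1" "\<And>x. x \<in> {0<..<1} - S \<Longrightarrow> a \<le> x"
    and "AE x in lborel. (indicator (S \<inter> {0..1}) x :: ennreal) = indicator {0..a} x"
    using downclosed_AE_eq_atLeastAtMost[of S] down by metis
  moreover have "c \<notin> S" using s by (simp add: S_def shortfall_def)
  ultimately show thesis using c by (intro that[of a]) (auto simp: S_def)
qed

section \<open>The operator \<open>T\<close> for a joint density\<close>

locale joint_density =
  fixes f :: "real \<Rightarrow> real \<Rightarrow> real"
  assumes measurable_density: "(\<lambda>(x, w). f x w) \<in> borel_measurable (lborel \<Otimes>\<^sub>M lborel)"
    and density_nonneg: "\<And>x w. x \<in> {0..1} \<Longrightarrow> w \<in> {0..1} \<Longrightarrow> 0 \<le> f x w"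
    and fW_pos: "\<And>w. w \<in> {0..1} \<Longrightarrow> 0 < fW f w"
begin

lemma measurable_density_pair [measurable]:
  "(\<lambda>z. f (fst z) (snd z)) \<in> borel_measurable (lborel \<Otimes>\<^sub>M lborel)"
  using measurable_density by (simp add: case_prod_beta')

lemma measurable_density_swap [measurable]:
  "(\<lambda>z. f (snd z) (fst z)) \<in> borel_measurable (lborel \<Otimes>\<^sub>M lborel)"
  using measurable_pair_swap[OF measurable_density] by (simp add: case_prod_beta')

lemma measurable_density_section [measurable]: "(\<lambda>x. f x w) \<in> borel_measurable lborel"
  using measurable_Pair2[OF measurable_density_swap, of w] by simp

lemma density_section_integrable:
  assumes "w \<in> {0..1}"
  shows "set_integrable lborel {0..1} (\<lambda>x. f x w)"
proof (rule ccontr)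
  assume "\<not> ?thesis"
  then have "fW f w = 0"
    unfolding fW_def set_lebesgue_integral_def set_integrable_def
    by (simp add: not_integrable_integral_eq)
  with fW_pos[OF assms] show False by simp
qed

lemma nn_integral_density_section:
  assumes w: "w \<in> {0..1}" and S: "S \<in> sets lborel" "S \<subseteq> {0..1}"
  shows "(\<integral>\<^sup>+x. indicator S x * ennreal (f x w) \<partial>lborel) = ennreal (LINT x:S|lborel. f x w)"
proof -
  have int: "integrable lborel (\<lambda>x. indicator S x * f x w)"
    using set_integrable_subset[OF density_section_integrable[OF w] S]
    by (simp add: set_integrable_def)
  have nonneg: "AE x in lborel. 0 \<le> indicator S x * f x w"
    using S w density_nonneg by (intro AE_I2) (auto simp: indicator_def subset_iff)
  have "(\<integral>\<^sup>+x. indicator S x * ennreal (f x w) \<partial>lborel) = (\<integral>\<^sup>+x. ennreal (indicator S x * f x w) \<partial>lborel)"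
    by (intro nn_integral_cong) (auto simp: indicator_def)
  also have "\<dots> = ennreal (LINT x:S|lborel. f x w)"
    by (simp add: set_lebesgue_integral_def nn_integral_eq_integral[OF int nonneg])
  finally show ?thesis .
qed

lemma nn_integral_density_atLeastAtMost:
  assumes "w \<in> {0..1}" "a \<in> {0..1}"
  shows "(\<integral>\<^sup>+x. indicator {0..a} x * ennreal (f x w) \<partial>lborel) = ennreal (fW f w * condCDF f a w)"
  using nn_integral_density_section[OF assms(1), of "{0..a}"] assms fW_pos[OF assms(1)]
  by (simp add: condCDF_def)

lemma nn_integral_density_greaterThanAtMost:
  assumes w: "w \<in> {0..1}" and a: "a \<in> {0..1}"
  shows "(\<integral>\<^sup>+x. indicator {a<..1} x * ennreal (f x w) \<partial>lborel) = ennreal (fW f w * (1 - condCDF f a w))"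
proof -
  have "set_integrable lborel {0..a} (\<lambda>x. f x w)" "set_integrable lborel {a<..1} (\<lambda>x. f x w)"
    using a by (auto intro: set_integrable_subset[OF density_section_integrable[OF w]])
  moreover have "{0..1} = {0..a} \<union> {a<..1}" using a by auto
  ultimately have "fW f w = (LINT x:{0..a}|lborel. f x w) + (LINT x:{a<..1}|lborel. f x w)"
    unfolding fW_def by (simp add: set_integral_Un ivl_disj_int)
  then have "fW f w * (1 - condCDF f a w) = (LINT x:{a<..1}|lborel. f x w)"
    using fW_pos[OF w] by (simp add: condCDF_def field_simps)
  moreover have "{a<..1} \<subseteq> {0..1}" using a by auto
  ultimately show ?thesis using nn_integral_density_section[OF w] by simp
qed

lemma condCDF_zero: "w \<in> {0..1} \<Longrightarrow> condCDF f 0 w = 0"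
proof -
  have "(LINT t:{0}|lborel. f t w) = 0"
    unfolding set_lebesgue_integral_def
    by (rule integral_eq_zero_AE) (use AE_lborel_singleton[of 0] in \<open>auto elim!: eventually_mono\<close>)
  then show ?thesis by (simp add: condCDF_def)
qed

lemma condCDF_one: "w \<in> {0..1} \<Longrightarrow> condCDF f 1 w = 1"
  using fW_pos[of w] unfolding condCDF_def fW_def[symmetric] by simp

text \<open>\<open>T\<close> applied to a non-negative function, computed in \<open>[0, \<infinity>]\<close> so that no integrability
  is needed.\<close>
definition opT_nn :: "(real \<Rightarrow> real) \<Rightarrow> real \<Rightarrow> ennreal" where
  "opT_nn psi w = (\<integral>\<^sup>+x. ennreal (psi x) * (ennreal (f x w) * indicator {0..1} x) \<partial>lborel)"

lemma opT_nn_compare_by_level_sets: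
  assumes [measurable]: "psi \<in> borel_measurable lborel"
    and level: "\<And>s. 0 < s \<Longrightarrow> \<exists>I.
      (AE x in lborel. indicator ({x. s < psi x} \<inter> {0..1}) x = (indicator I x :: ennreal)) \<and>
      A * (\<integral>\<^sup>+x. indicator I x * ennreal (f x w) \<partial>lborel) \<le> B * (\<integral>\<^sup>+x. indicator I x * ennreal (f x w') \<partial>lborel)"
  shows "A * opT_nn psi w \<le> B * opT_nn psi w'"
  unfolding opT_nn_def
proof (rule nn_integral_layer_cake_mono)
  fix s :: real
  assume "0 < s"
  then obtain I where
    AE_I: "AE x in lborel. indicator ({x. s < psi x} \<inter> {0..1}) x = (indicator I x :: ennreal)" and
    le_I: "A * (\<integral>\<^sup>+x. indicator I x * ennreal (f x w) \<partial>lborel) \<le> B * (\<integral>\<^sup>+x. indicator I x * ennreal (f x w') \<partial>lborel)"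
    using level by blast
  have "(\<integral>\<^sup>+x. indicator {x. s < psi x} x * (ennreal (f x v) * indicator {0..1} x) \<partial>lborel)
      = (\<integral>\<^sup>+x. indicator I x * ennreal (f x v) \<partial>lborel)" for v
  proof -
    have "(\<integral>\<^sup>+x. indicator {x. s < psi x} x * (ennreal (f x v) * indicator {0..1} x) \<partial>lborel)
        = (\<integral>\<^sup>+x. indicator ({x. s < psi x} \<inter> {0..1}) x * ennreal (f x v) \<partial>lborel)"
      by (intro nn_integral_cong) (auto simp: indicator_def)
    also have "\<dots> = (\<integral>\<^sup>+x. indicator I x * ennreal (f x v) \<partial>lborel)"
      using AE_I by (intro nn_integral_cong_AE) (auto elim!: eventually_mono)
    finally show ?thesis .
  qed
  then show "A * (\<integral>\<^sup>+x. indicator {x. s < psi x} x * (ennreal (f x w) * indicator {0..1} x) \<partial>lborel)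
      \<le> B * (\<integral>\<^sup>+x. indicator {x. s < psi x} x * (ennreal (f x w') * indicator {0..1} x) \<partial>lborel)"
    using le_I by simp
qed measurable

lemma fW_cross_mult_le:
  assumes "w \<in> {0..1}" "w' \<in> {0..1}" "0 \<le> k" "k * p \<le> p'"
  shows "ennreal (k * fW f w') * ennreal (fW f w * p) \<le> ennreal (fW f w) * ennreal (fW f w' * p')"
proof -
  have "k * fW f w' * (fW f w * p) = fW f w * fW f w' * (k * p)" by (simp add: algebra_simps)
  also have "\<dots> \<le> fW f w * (fW f w' * p')"
    using assms fW_pos[of w] fW_pos[of w'] by (simp add: mult_left_mono)
  finally show ?thesis
    using assms fW_pos[of w] fW_pos[of w'] by (simp add: ennreal_mult'[symmetric] ennreal_leI)
qed

text \<open>First-order stochastic dominance of the conditional laws transfers to the positive and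
  negative parts of \<open>h - h c\<close>: their level sets are intervals \<open>(a, 1]\<close> resp. \<open>[0, a]\<close>.\<close>

lemma opT_nn_excess_compare:
  assumes [measurable]: "h \<in> borel_measurable lborel" and mono: "mono_on {0<..<1} h"
    and c: "c \<in> {0<..<1}" and w: "w \<in> {0..1}" "w' \<in> {0..1}" and k: "0 \<le> k"
    and cdf: "\<And>a. c \<le> a \<Longrightarrow> a < 1 \<Longrightarrow> k * (1 - condCDF f a w) \<le> 1 - condCDF f a w'"
  shows "ennreal (k * fW f w') * opT_nn (excess h c) w \<le> ennreal (fW f w) * opT_nn (excess h c) w'"
proof (rule opT_nn_compare_by_level_sets)
  fix s :: real
  assume "0 < s"
  then obtain a where a: "c \<le> a" "a \<le> 1"
    and AE_a: "AE x in lborel. (indicator ({x. s < excess h c x} \<inter> {0..1}) x :: ennreal) = indicator {a<..1} x"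
    by (rule excess_level_set_AE[OF mono c])
  have "k * (1 - condCDF f a w) \<le> 1 - condCDF f a w'"
    using cdf a w by (cases "a = 1") (auto simp: condCDF_one)
  then show "\<exists>I. (AE x in lborel. indicator ({x. s < excess h c x} \<inter> {0..1}) x = (indicator I x :: ennreal)) \<and>
      ennreal (k * fW f w') * (\<integral>\<^sup>+x. indicator I x * ennreal (f x w) \<partial>lborel)
      \<le> ennreal (fW f w) * (\<integral>\<^sup>+x. indicator I x * ennreal (f x w') \<partial>lborel)"
    using AE_a a c w k
    by (intro exI[of _ "{a<..1}"]) (simp add: nn_integral_density_greaterThanAtMost fW_cross_mult_le)
qed measurable

lemma opT_nn_shortfall_compare:
  assumes [measurable]: "h \<in> borel_measurable lborel" and mono: "mono_on {0<..<1} h"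
    and c: "c \<in> {0<..<1}" and w: "w \<in> {0..1}" "w' \<in> {0..1}" and k: "0 \<le> k"
    and cdf: "\<And>a. 0 < a \<Longrightarrow> a \<le> c \<Longrightarrow> k * condCDF f a w \<le> condCDF f a w'"
  shows "ennreal (k * fW f w') * opT_nn (shortfall h c) w \<le> ennreal (fW f w) * opT_nn (shortfall h c) w'"
proof (rule opT_nn_compare_by_level_sets)
  fix s :: real
  assume "0 < s"
  then obtain a where a: "0 \<le> a" "a \<le> c"
    and AE_a: "AE x in lborel. (indicator ({x. s < shortfall h c x} \<inter> {0..1}) x :: ennreal) = indicator {0..a} x"
    by (rule shortfall_level_set_AE[OF mono c])
  have "k * condCDF f a w \<le> condCDF f a w'"
    using cdf a w by (cases "a = 0") (auto simp: condCDF_zero)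
  then show "\<exists>I. (AE x in lborel. indicator ({x. s < shortfall h c x} \<inter> {0..1}) x = (indicator I x :: ennreal)) \<and>
      ennreal (k * fW f w') * (\<integral>\<^sup>+x. indicator I x * ennreal (f x w) \<partial>lborel)
      \<le> ennreal (fW f w) * (\<integral>\<^sup>+x. indicator I x * ennreal (f x w') \<partial>lborel)"
    using AE_a a c w k
    by (intro exI[of _ "{0..a}"]) (simp add: nn_integral_density_atLeastAtMost fW_cross_mult_le)
qed measurable

lemma opT_nn_eq_set_integral:
  assumes w: "w \<in> {0..1}" and nonneg: "\<And>x. 0 \<le> psi x" and [measurable]: "psi \<in> borel_measurable lborel"
    and finite: "opT_nn psi w < \<infinity>"
  shows "set_integrable lborel {0..1} (\<lambda>x. psi x * f x w)"
    and "opT_nn psi w = ennreal (LINT x:{0..1}|lborel. psi x * f x w)"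
proof -
  have eq: "opT_nn psi w = (\<integral>\<^sup>+x. ennreal (indicator {0..1} x * (psi x * f x w)) \<partial>lborel)"
    unfolding opT_nn_def
    by (intro nn_integral_cong, rename_tac x, case_tac "x \<in> {0..1}")
      (use nonneg density_nonneg w in \<open>auto simp: ennreal_mult\<close>)
  have AE_nonneg: "AE x in lborel. 0 \<le> indicator {0..1} x * (psi x * f x w)"
    using nonneg density_nonneg w by (intro AE_I2) (auto simp: indicator_def)
  have int: "integrable lborel (\<lambda>x. indicator {0..1} x * (psi x * f x w))"
    using finite eq by (intro integrableI_nn_integral_finite[OF _ AE_nonneg, of "enn2real (opT_nn psi w)"]) auto
  then show "set_integrable lborel {0..1} (\<lambda>x. psi x * f x w)"
    by (simp add: set_integrable_def)
  show "opT_nn psi w = ennreal (LINT x:{0..1}|lborel. psi x * f x w)"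
    using eq nn_integral_eq_integral[OF int AE_nonneg] by (simp add: set_lebesgue_integral_def)
qed

lemma opT_nn_le_abs_shift:
  assumes w: "w \<in> {0..1}" and psi: "\<And>x. 0 \<le> psi x" "\<And>x. psi x \<le> \<bar>h x\<bar> + \<bar>h c\<bar>"
    and [measurable]: "h \<in> borel_measurable lborel"
  shows "opT_nn psi w \<le> opT_nn (\<lambda>x. \<bar>h x\<bar>) w + ennreal \<bar>h c\<bar> * ennreal (fW f w)"
proof -
  have "opT_nn psi w \<le> (\<integral>\<^sup>+x. ennreal \<bar>h x\<bar> * (ennreal (f x w) * indicator {0..1} x)
      + ennreal \<bar>h c\<bar> * (ennreal (f x w) * indicator {0..1} x) \<partial>lborel)"
    unfolding opT_nn_def
  proof (intro nn_integral_mono)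
    fix x
    have "ennreal (psi x) \<le> ennreal \<bar>h x\<bar> + ennreal \<bar>h c\<bar>"
      using psi(2)[of x] by (simp add: ennreal_plus[symmetric] ennreal_leI del: ennreal_plus)
    then show "ennreal (psi x) * (ennreal (f x w) * indicator {0..1} x)
        \<le> ennreal \<bar>h x\<bar> * (ennreal (f x w) * indicator {0..1} x) + ennreal \<bar>h c\<bar> * (ennreal (f x w) * indicator {0..1} x)"
      by (metis distrib_right mult_right_mono zero_le)
  qed
  also have "\<dots> = opT_nn (\<lambda>x. \<bar>h x\<bar>) w + ennreal \<bar>h c\<bar> * ennreal (fW f w)"
    using nn_integral_density_section[OF w, of "{0..1}"]
    by (subst nn_integral_add) (auto simp: opT_nn_def nn_integral_cmult fW_def mult.commute)
  finally show ?thesis .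
qed

lemma opT_eq_excess_shortfall:
  assumes w: "w \<in> {0..1}" and [measurable]: "h \<in> borel_measurable lborel"
    and finite: "opT_nn (excess h c) w < \<infinity>" "opT_nn (shortfall h c) w < \<infinity>"
  shows "opT f h w = h c * fW f w + enn2real (opT_nn (excess h c) w) - enn2real (opT_nn (shortfall h c) w)"
proof -
  note excess = opT_nn_eq_set_integral[OF w excess_nonneg _ finite(1)]
  note shortfall = opT_nn_eq_set_integral[OF w shortfall_nonneg _ finite(2)]
  have "h x * f x w = h c * f x w + excess h c x * f x w - shortfall h c x * f x w" for x
    by (simp add: excess_def shortfall_def max_def algebra_simps)
  then have "opT f h w = (LINT x:{0..1}|lborel. h c * f x w + excess h c x * f x w - shortfall h c x * f x w)"
    by (simp add: opT_def)
  also have "\<dots> = h c * fW f w + (LINT x:{0..1}|lborel. excess h c x * f x w)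
      - (LINT x:{0..1}|lborel. shortfall h c x * f x w)"
    using density_section_integrable[OF w] excess(1) shortfall(1)
    by (simp add: set_integral_diff set_integral_add set_integral_mult_right fW_def set_integrable_mult_right)
  also have "\<dots> = h c * fW f w + enn2real (opT_nn (excess h c) w) - enn2real (opT_nn (shortfall h c) w)"
  proof -
    have "0 \<le> (LINT x:{0..1}|lborel. psi x * f x w)" if "\<And>x. 0 \<le> psi x" for psi
      unfolding set_lebesgue_integral_def using that density_nonneg w
      by (intro integral_nonneg_AE AE_I2) (auto simp: indicator_def)
    then show ?thesis using excess(2) shortfall(2) excess_nonneg shortfall_nonneg by simp
  qed
  finally show ?thesis .
qed

end

section \<open>Square integrable data\<close>

locale square_integrable_model = joint_density f for f +
  fixes h :: "real \<Rightarrow> real"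
  assumes h_measurable [measurable]: "h \<in> borel_measurable lborel"
    and h_square_integrable: "set_integrable lborel {0..1} (\<lambda>x. (h x)\<^sup>2)"
    and density_square_finite:
      "(\<integral>\<^sup>+ z \<in> {0..1} \<times> {0..1}. ennreal ((case z of (x, w) \<Rightarrow> f x w)\<^sup>2) \<partial>(lborel \<Otimes>\<^sub>M lborel)) < \<infinity>"
begin

definition section_sq_norm :: "real \<Rightarrow> ennreal" where
  "section_sq_norm w = (\<integral>\<^sup>+x. ennreal ((f x w)\<^sup>2) * indicator {0..1} x \<partial>lborel)"

lemma measurable_section_sq_norm [measurable]: "section_sq_norm \<in> borel_measurable lborel"
  unfolding section_sq_norm_def by measurable

lemma nn_integral_section_sq_norm_finite: "(\<integral>\<^sup>+w. section_sq_norm w * indicator {0..1} w \<partial>lborel) < \<infinity>"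
proof -
  have "(\<integral>\<^sup>+w. section_sq_norm w * indicator {0..1} w \<partial>lborel) =
    (\<integral>\<^sup>+w. (\<integral>\<^sup>+x. ennreal ((f x w)\<^sup>2) * indicator ({0..1} \<times> {0..1}) (x, w) \<partial>lborel) \<partial>lborel)"
    unfolding section_sq_norm_def
    by (intro nn_integral_cong)
      (auto simp: indicator_def nn_integral_multc[symmetric] mult.assoc intro!: nn_integral_cong)
  also have "\<dots> = (\<integral>\<^sup>+z. ennreal ((f (fst z) (snd z))\<^sup>2) * indicator ({0..1} \<times> {0..1}) z \<partial>(lborel \<Otimes>\<^sub>M lborel))"
    by (rule lborel_pair.nn_integral_snd[where f = "\<lambda>z. ennreal ((f (fst z) (snd z))\<^sup>2) * indicator ({0..1} \<times> {0..1}) z", simplified])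
      measurable
  also have "\<dots> < \<infinity>" using density_square_finite by (simp add: case_prod_beta')
  finally show ?thesis .
qed

lemma nn_integral_h_sq: "(\<integral>\<^sup>+x. ennreal ((h x)\<^sup>2) * indicator {0..1} x \<partial>lborel) = ennreal (LINT x:{0..1}|lborel. (h x)\<^sup>2)"
proof -
  have int: "integrable lborel (\<lambda>x. indicator {0..1} x * (h x)\<^sup>2)"
    using h_square_integrable by (simp add: set_integrable_def)
  have "(\<integral>\<^sup>+x. ennreal ((h x)\<^sup>2) * indicator {0..1} x \<partial>lborel)
      = (\<integral>\<^sup>+x. ennreal (indicator {0..1} x * (h x)\<^sup>2) \<partial>lborel)"
    by (intro nn_integral_cong) (auto simp: indicator_def)
  then show ?thesis
    by (simp add: set_lebesgue_integral_def nn_integral_eq_integral[OF int])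
qed

text \<open>\<open>T\<bar>h\<bar>\<close> is finite almost everywhere, since \<open>2\<bar>h(x)\<bar>f(x,w) \<le> h(x)\<^sup>2 + f(x,w)\<^sup>2\<close> is integrable
  over the square.\<close>
lemma AE_opT_nn_abs_finite: "AE w in lborel. w \<in> {0..1} \<longrightarrow> opT_nn (\<lambda>x. \<bar>h x\<bar>) w < \<infinity>"
proof -
  have pointwise: "ennreal \<bar>h x\<bar> * (ennreal (f x w) * indicator {0..1} x)
      \<le> ennreal ((h x)\<^sup>2) * indicator {0..1} x + ennreal ((f x w)\<^sup>2) * indicator {0..1} x" for x w
  proof (cases "0 \<le> f x w")
    case True
    have "2 * (\<bar>h x\<bar> * f x w) \<le> (h x)\<^sup>2 + (f x w)\<^sup>2"
      using zero_le_power2[of "\<bar>h x\<bar> - f x w"] by (simp add: power2_diff power2_abs)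
    moreover have "0 \<le> \<bar>h x\<bar> * f x w" using True by simp
    ultimately have "\<bar>h x\<bar> * f x w \<le> (h x)\<^sup>2 + (f x w)\<^sup>2" by linarith
    then have "ennreal (\<bar>h x\<bar> * f x w) \<le> ennreal ((h x)\<^sup>2) + ennreal ((f x w)\<^sup>2)"
      by (simp add: ennreal_plus[symmetric] ennreal_leI del: ennreal_plus)
    then show ?thesis using True
      by (cases "x \<in> {0..1}") (auto simp: ennreal_mult)
  qed (simp add: ennreal_neg)
  have bound: "opT_nn (\<lambda>x. \<bar>h x\<bar>) w \<le> ennreal (LINT x:{0..1}|lborel. (h x)\<^sup>2) + section_sq_norm w" for w
  proof -
    have "opT_nn (\<lambda>x. \<bar>h x\<bar>) w \<le> (\<integral>\<^sup>+x. ennreal ((h x)\<^sup>2) * indicator {0..1} x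
        + ennreal ((f x w)\<^sup>2) * indicator {0..1} x \<partial>lborel)"
      unfolding opT_nn_def by (rule nn_integral_mono) (rule pointwise)
    also have "\<dots> = ennreal (LINT x:{0..1}|lborel. (h x)\<^sup>2) + section_sq_norm w"
      by (subst nn_integral_add) (simp_all add: nn_integral_h_sq section_sq_norm_def)
    finally show ?thesis .
  qed
  have "(\<integral>\<^sup>+w. opT_nn (\<lambda>x. \<bar>h x\<bar>) w * indicator {0..1} w \<partial>lborel)
      \<le> (\<integral>\<^sup>+w. ennreal (LINT x:{0..1}|lborel. (h x)\<^sup>2) * indicator {0..1} w + section_sq_norm w * indicator {0..1} w \<partial>lborel)"
    using bound by (intro nn_integral_mono) (auto simp: indicator_def)
  also have "\<dots> = ennreal (LINT x:{0..1}|lborel. (h x)\<^sup>2) + (\<integral>\<^sup>+w. section_sq_norm w * indicator {0..1} w \<partial>lborel)"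
    by (subst nn_integral_add) (auto simp: nn_integral_cmult_indicator)
  also have "\<dots> < \<infinity>" using nn_integral_section_sq_norm_finite by simp
  finally have "AE w in lborel. opT_nn (\<lambda>x. \<bar>h x\<bar>) w * indicator {0..1} w \<noteq> \<infinity>"
    by (intro nn_integral_PInf_AE) (auto simp: opT_nn_def)
  then show ?thesis
    by eventually_elim (auto simp: indicator_def top.not_eq_extremum)
qed

lemma exists_opT_nn_abs_finite:
  assumes "a < b" "{a<..<b} \<subseteq> {0..1}"
  obtains w where "w \<in> {a<..<b}" "opT_nn (\<lambda>x. \<bar>h x\<bar>) w < \<infinity>"
proof -
  obtain N where N: "{w \<in> space lborel. \<not> (w \<in> {0..1} \<longrightarrow> opT_nn (\<lambda>x. \<bar>h x\<bar>) w < \<infinity>)} \<subseteq> N"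
    "emeasure lborel N = 0" "N \<in> sets lborel"
    using AE_opT_nn_abs_finite by (auto elim!: AE_E)
  have "\<not> {a<..<b} \<subseteq> N"
    using N(2,3) emeasure_mono[of "{a<..<b}" N lborel] assms(1) by auto
  then obtain w where "w \<in> {a<..<b}" "w \<notin> N" by blast
  then show thesis using N(1) assms(2) by (intro that[of w]) (auto simp: subset_iff)
qed

lemma measurable_opT [measurable]: "opT f h \<in> borel_measurable lborel"
  unfolding opT_def[abs_def] set_lebesgue_integral_def by measurable

lemma ennreal_opT_sq_le:
  "ennreal ((opT f h w)\<^sup>2) \<le> ennreal (LINT x:{0..1}|lborel. (h x)\<^sup>2) * section_sq_norm w"
proof -
  define u where "u x = ennreal \<bar>h x\<bar> * indicator {0..1} x" for x
  define v where "v x = ennreal \<bar>f x w\<bar> * indicator {0..1} x" for x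
  have [measurable]: "u \<in> borel_measurable lborel" "v \<in> borel_measurable lborel"
    unfolding u_def v_def by measurable
  have abs_le: "ennreal \<bar>opT f h w\<bar> \<le> (\<integral>\<^sup>+x. u x * v x \<partial>lborel)"
  proof (cases "integrable lborel (\<lambda>x. indicator {0..1} x *\<^sub>R (h x * f x w))")
    case True
    have "ennreal \<bar>opT f h w\<bar> \<le> (\<integral>\<^sup>+x. norm (indicator {0..1} x *\<^sub>R (h x * f x w)) \<partial>lborel)"
      unfolding opT_def set_lebesgue_integral_def
      using integral_norm_bound_ennreal[OF True] by simp
    also have "\<dots> = (\<integral>\<^sup>+x. u x * v x \<partial>lborel)"
      unfolding u_def v_def
      by (intro nn_integral_cong) (auto simp: indicator_def abs_mult ennreal_mult)
    finally show ?thesis .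
  next
    case False
    then show ?thesis
      by (simp add: opT_def set_lebesgue_integral_def not_integrable_integral_eq)
  qed
  have "ennreal ((opT f h w)\<^sup>2) = (ennreal \<bar>opT f h w\<bar>)\<^sup>2"
    by (simp add: ennreal_power power2_abs)
  also have "\<dots> \<le> (\<integral>\<^sup>+x. u x * v x \<partial>lborel)\<^sup>2"
    using abs_le by (rule power_mono_ennreal)
  also have "\<dots> \<le> (\<integral>\<^sup>+x. u x ^ 2 \<partial>lborel) * (\<integral>\<^sup>+x. v x ^ 2 \<partial>lborel)"
    by (rule Cauchy_Schwarz_nn_integral) measurable
  also have "(\<integral>\<^sup>+x. u x ^ 2 \<partial>lborel) = ennreal (LINT x:{0..1}|lborel. (h x)\<^sup>2)"
    unfolding nn_integral_h_sq[symmetric] u_def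
    by (intro nn_integral_cong) (auto simp: indicator_def ennreal_power power2_abs)
  also have "(\<integral>\<^sup>+x. v x ^ 2 \<partial>lborel) = section_sq_norm w"
    unfolding section_sq_norm_def v_def
    by (intro nn_integral_cong) (auto simp: indicator_def ennreal_power power2_abs)
  finally show ?thesis .
qed

lemma opT_square_integrable: "set_integrable lborel {0..1} (\<lambda>w. (opT f h w)\<^sup>2)"
  unfolding set_integrable_def
proof (rule integrableI_bounded)
  have "(\<integral>\<^sup>+w. ennreal (norm (indicat_real {0..1} w *\<^sub>R (opT f h w)\<^sup>2)) \<partial>lborel)
      \<le> (\<integral>\<^sup>+w. ennreal (LINT x:{0..1}|lborel. (h x)\<^sup>2) * (section_sq_norm w * indicator {0..1} w) \<partial>lborel)"
    using ennreal_opT_sq_le by (intro nn_integral_mono) (auto simp: indicator_def)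
  also have "\<dots> = ennreal (LINT x:{0..1}|lborel. (h x)\<^sup>2) * (\<integral>\<^sup>+w. section_sq_norm w * indicator {0..1} w \<partial>lborel)"
    by (rule nn_integral_cmult) measurable
  also have "\<dots> < \<infinity>"
    using nn_integral_section_sq_norm_finite by (simp add: ennreal_mult_less_top)
  finally show "(\<integral>\<^sup>+w. ennreal (norm (indicat_real {0..1} w *\<^sub>R (opT f h w)\<^sup>2)) \<partial>lborel) < \<infinity>" .
qed measurable

lemma integral_opT_sq_ge:
  assumes "a \<le> b" "{a<..<b} \<subseteq> {0..1}" and le: "\<And>w. w \<in> {a<..<b} \<Longrightarrow> C \<le> (opT f h w)\<^sup>2"
  shows "(b - a) * C \<le> (LINT w:{0..1}|lborel. (opT f h w)\<^sup>2)"
proof -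
  have "(b - a) * C = (LINT w|lborel. indicator {a<..<b} w * C)"
    using assms(1) by simp
  also have "\<dots> \<le> (LINT w|lborel. indicator {0..1} w * (opT f h w)\<^sup>2)"
  proof (rule integral_mono)
    show "integrable lborel (\<lambda>w. indicator {a<..<b} w * C)"
      using assms(1) by (simp add: integrable_real_indicator)
    show "integrable lborel (\<lambda>w. indicator {0..1} w * (opT f h w)\<^sup>2)"
      using opT_square_integrable by (simp add: set_integrable_def)
    show "indicator {a<..<b} w * C \<le> indicator {0..1} w * (opT f h w)\<^sup>2" for w
      using le[of w] assms(2) by (auto simp: indicator_def)
  qed
  finally show ?thesis by (simp add: set_lebesgue_integral_def)
qed

end

section \<open>The monotone instrumental variable model\<close>

lemma enn2real_div_le_of_ennreal_le:
  fixes X Y :: ennreal and k u u' :: real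
  assumes le: "ennreal (k * u') * X \<le> ennreal u * Y" and finite: "X < \<infinity>" "Y < \<infinity>"
    and pos: "0 < u" "0 < u'" and k: "0 \<le> k"
  shows "k * (enn2real X / u) \<le> enn2real Y / u'"
proof -
  have "ennreal (k * u' * enn2real X) \<le> ennreal (u * enn2real Y)"
    using le finite pos k by (simp add: ennreal_mult ennreal_enn2real_if less_top[symmetric])
  then have "k * u' * enn2real X \<le> u * enn2real Y"
    using pos by (simp add: ennreal_le_iff)
  then show ?thesis
    using pos by (simp add: field_simps)
qed

definition level_const :: "real \<Rightarrow> real \<Rightarrow> real" where
  "level_const C_F D = 1 + 2 * C_F / (C_F - 1) * (1 + 1 / D) + 2 / (C_F - 1)"

text \<open>\<open>P\<^sub>i\<close>, \<open>Q\<^sub>i\<close> stand for the conditional means of the two parts of \<open>h - hc\<close> at \<open>w\<^sub>i\<close>, and the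
  maxima are \<open>g(w\<^sub>2)\<^sup>+\<close>, \<open>g(w\<^sub>1)\<^sup>-\<close>. The gaps \<open>P\<^sub>2 - P\<^sub>1\<close> and \<open>Q\<^sub>1 - Q\<^sub>2\<close> are non-negative and add up
  to \<open>g(w\<^sub>2) - g(w\<^sub>1) \<le> 2K\<close>, so the dominance inequalities bound \<open>P\<^sub>2\<close> and \<open>Q\<^sub>2\<close>.\<close>
lemma abs_add_le_level_const:
  fixes hc d P1 P2 Q1 Q2 C_F D :: real
  assumes C_F: "1 < C_F" and D: "0 < D" and nonneg: "0 \<le> P1" "0 \<le> Q2"
    and gap_P: "C_F * P1 \<le> P2" and gap_Q: "C_F * Q2 \<le> Q1" and d: "0 \<le> d" "d * D \<le> P2"
  shows "\<bar>hc\<bar> + d \<le> max (max 0 (hc + P2 - Q2)) (max 0 (- (hc + P1 - Q1))) * level_const C_F D"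
proof -
  define K where "K = max (max 0 (hc + P2 - Q2)) (max 0 (- (hc + P1 - Q1)))"
  have K: "0 \<le> K" "hc + P2 - Q2 \<le> K" "- (hc + P1 - Q1) \<le> K" unfolding K_def by auto
  have "P1 \<le> C_F * P1" "Q2 \<le> C_F * Q2"
    using nonneg C_F by (simp_all add: mult_le_cancel_right1)
  then have P1_le: "P1 \<le> P2" and Q2_le: "Q2 \<le> Q1"
    using gap_P gap_Q by linarith+
  have sum: "(P2 - P1) + (Q1 - Q2) \<le> 2 * K" using K by linarith
  have "(C_F - 1) * P2 \<le> C_F * (P2 - P1)" using gap_P by (simp add: algebra_simps)
  also have "\<dots> \<le> C_F * (2 * K)" using sum Q2_le C_F by (intro mult_left_mono) auto
  finally have P2: "P2 \<le> 2 * K * C_F / (C_F - 1)"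
    using C_F by (simp add: pos_le_divide_eq mult.commute mult.left_commute)
  have "(C_F - 1) * Q2 \<le> 2 * K" using gap_Q sum P1_le by (simp add: algebra_simps)
  then have Q2: "Q2 \<le> 2 * K / (C_F - 1)"
    using C_F by (simp add: pos_le_divide_eq mult.commute)
  have "\<bar>hc\<bar> \<le> K + P2 + Q2" using K P1_le Q2_le nonneg by linarith
  moreover have "d \<le> P2 / D" using d D by (simp add: pos_le_divide_eq)
  ultimately have "\<bar>hc\<bar> + d \<le> K + P2 * (1 + 1 / D) + Q2" by (simp add: algebra_simps)
  also have "\<dots> \<le> K + 2 * K * C_F / (C_F - 1) * (1 + 1 / D) + 2 * K / (C_F - 1)"
    using P2 Q2 D by (intro add_mono mult_right_mono) auto
  also have "\<dots> = K * level_const C_F D"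
    by (simp add: level_const_def algebra_simps)
  finally show ?thesis unfolding K_def .
qed

lemma norm2t_le_of_abs_le:
  assumes "a \<le> b" and int: "set_integrable lborel {a..b} (\<lambda>x. (h x)\<^sup>2)"
    and bound: "\<And>x. x \<in> {a..b} \<Longrightarrow> \<bar>h x\<bar> \<le> B"
  shows "norm2t a b h \<le> B * sqrt (b - a)"
proof -
  have B: "0 \<le> B" using bound[of a] assms(1) by auto
  have "(LINT x:{a..b}|lborel. (h x)\<^sup>2) \<le> (LINT x:{a..b}|lborel. B\<^sup>2)"
  proof (rule set_integral_mono[OF int])
    have "integrable lborel (indicat_real {a..b})"
      using assms(1) by (intro integrable_real_indicator) auto
    then show "set_integrable lborel {a..b} (\<lambda>x. B\<^sup>2)"
      by (simp add: set_integrable_def)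
    show "(h x)\<^sup>2 \<le> B\<^sup>2" if "x \<in> {a..b}" for x
      using bound[OF that] by (metis abs_ge_zero power2_abs power_mono)
  qed
  also have "\<dots> = B\<^sup>2 * (b - a)" using assms(1) by (simp add: set_lebesgue_integral_def)
  finally show ?thesis
    unfolding norm2t_def using B assms(1) real_sqrt_le_mono
    by (fastforce simp: real_sqrt_mult)
qed

definition stability_const :: "real \<Rightarrow> real \<Rightarrow> real \<Rightarrow> real \<Rightarrow> real \<Rightarrow> real \<Rightarrow> real \<Rightarrow> real \<Rightarrow> real" where
  "stability_const C_F c_f c_W x2 xt1 xt2 w1 w2 =
     sqrt (xt2 - xt1) * level_const C_F (c_f * (x2 - xt2)) / (c_W * sqrt (min w1 (1 - w2)))"

locale monotone_iv_model = square_integrable_model f h for f h +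
  fixes C_F c_f c_W x1 x2 xt1 xt2 w1 w2 :: real
  assumes geometry: "0 \<le> x1" "x1 < xt1" "xt1 < xt2" "xt2 < x2" "x2 \<le> 1" "0 < w1" "w1 < w2" "w2 < 1"
    and condCDF_antimono: "\<And>x w' w''. x \<in> {0<..<1} \<Longrightarrow> w' \<in> {0<..<1} \<Longrightarrow> w'' \<in> {0<..<1} \<Longrightarrow>
      w' \<le> w'' \<Longrightarrow> condCDF f x w'' \<le> condCDF f x w'"
    and C_F_gt_1: "1 < C_F"
    and condCDF_lower_gap: "\<And>x. x \<in> {0<..<x2} \<Longrightarrow> C_F * condCDF f x w2 \<le> condCDF f x w1"
    and condCDF_upper_gap: "\<And>x. x \<in> {x1<..<1} \<Longrightarrow> C_F * (1 - condCDF f x w1) \<le> 1 - condCDF f x w2"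
    and c_f_pos: "0 < c_f"
    and condDens_lower: "\<And>x w. x \<in> {x1..x2} \<Longrightarrow> w \<in> {w1, w2} \<Longrightarrow> c_f \<le> condDens f x w"
    and c_W_pos: "0 < c_W" and fW_lower: "\<And>w. w \<in> {0..1} \<Longrightarrow> c_W \<le> fW f w"
    and h_mono: "mono_on {0<..<1} h"
begin

lemma xt1_in: "xt1 \<in> {0<..<1}"
  using geometry by auto

lemma opT_nn_excess_mono:
  assumes "w \<in> {0<..<1}" "w' \<in> {0<..<1}" "w \<le> w'"
  shows "ennreal (fW f w') * opT_nn (excess h xt1) w \<le> ennreal (fW f w) * opT_nn (excess h xt1) w'"
  using opT_nn_excess_compare[OF h_measurable h_mono xt1_in, of w w' 1]
    condCDF_antimono[of _ w w'] assms xt1_in by auto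

lemma opT_nn_shortfall_antimono:
  assumes "w \<in> {0<..<1}" "w' \<in> {0<..<1}" "w \<le> w'"
  shows "ennreal (fW f w) * opT_nn (shortfall h xt1) w' \<le> ennreal (fW f w') * opT_nn (shortfall h xt1) w"
  using opT_nn_shortfall_compare[OF h_measurable h_mono xt1_in, of w' w 1]
    condCDF_antimono[of _ w w'] assms xt1_in by auto

lemma opT_nn_excess_gap:
  "ennreal (C_F * fW f w2) * opT_nn (excess h xt1) w1 \<le> ennreal (fW f w1) * opT_nn (excess h xt1) w2"
  by (rule opT_nn_excess_compare[OF h_measurable h_mono xt1_in])
    (use geometry C_F_gt_1 condCDF_upper_gap in auto)

lemma opT_nn_shortfall_gap:
  "ennreal (C_F * fW f w1) * opT_nn (shortfall h xt1) w2 \<le> ennreal (fW f w2) * opT_nn (shortfall h xt1) w1"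
  by (rule opT_nn_shortfall_compare[OF h_measurable h_mono xt1_in])
    (use geometry C_F_gt_1 condCDF_lower_gap in auto)

lemma opT_nn_excess_shortfall_le_abs:
  assumes "w \<in> {0..1}"
  shows "opT_nn (excess h xt1) w \<le> opT_nn (\<lambda>x. \<bar>h x\<bar>) w + ennreal \<bar>h xt1\<bar> * ennreal (fW f w)"
    and "opT_nn (shortfall h xt1) w \<le> opT_nn (\<lambda>x. \<bar>h x\<bar>) w + ennreal \<bar>h xt1\<bar> * ennreal (fW f w)"
  by (rule opT_nn_le_abs_shift[OF assms _ _ h_measurable]; auto simp: excess_def shortfall_def)+

text \<open>Finiteness spreads from a point where \<open>T\<bar>h\<bar>\<close> is finite, which exists in every interval, to
  all smaller (for the excess) resp. larger (for the shortfall) \<open>w\<close> by the monotonicity above.\<close>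
lemma opT_nn_excess_finite:
  assumes w: "w \<in> {0<..<1}"
  shows "opT_nn (excess h xt1) w < \<infinity>"
proof -
  have "w < 1" "{w<..<1} \<subseteq> {0..1}" using w by auto
  then obtain u where u: "u \<in> {w<..<1}" "opT_nn (\<lambda>x. \<bar>h x\<bar>) u < \<infinity>"
    by (rule exists_opT_nn_abs_finite)
  have "ennreal (fW f u) * opT_nn (excess h xt1) w \<le> ennreal (fW f w) * opT_nn (excess h xt1) u"
    using opT_nn_excess_mono[of w u] u w by auto
  also have "\<dots> < \<infinity>"
    using opT_nn_excess_shortfall_le_abs(1)[of u] u w
    by (auto simp: ennreal_mult_less_top intro: le_less_trans)
  finally show ?thesis
    using fW_pos[of u] u w by (auto simp: ennreal_mult_less_top)
qed

lemma opT_nn_shortfall_finite: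
  assumes w: "w \<in> {0<..<1}"
  shows "opT_nn (shortfall h xt1) w < \<infinity>"
proof -
  have "0 < w" "{0<..<w} \<subseteq> {0..1}" using w by auto
  then obtain v where v: "v \<in> {0<..<w}" "opT_nn (\<lambda>x. \<bar>h x\<bar>) v < \<infinity>"
    by (rule exists_opT_nn_abs_finite)
  have "ennreal (fW f v) * opT_nn (shortfall h xt1) w \<le> ennreal (fW f w) * opT_nn (shortfall h xt1) v"
    using opT_nn_shortfall_antimono[of v w] v w by auto
  also have "\<dots> < \<infinity>"
    using opT_nn_excess_shortfall_le_abs(2)[of v] v w
    by (auto simp: ennreal_mult_less_top intro: le_less_trans)
  finally show ?thesis
    using fW_pos[of v] v w by (auto simp: ennreal_mult_less_top)
qed

definition cond_excess :: "real \<Rightarrow> real" where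
  "cond_excess w = enn2real (opT_nn (excess h xt1) w) / fW f w"

definition cond_shortfall :: "real \<Rightarrow> real" where
  "cond_shortfall w = enn2real (opT_nn (shortfall h xt1) w) / fW f w"

definition cond_mean :: "real \<Rightarrow> real" where
  "cond_mean w = h xt1 + cond_excess w - cond_shortfall w"

lemma cond_excess_nonneg: "w \<in> {0..1} \<Longrightarrow> 0 \<le> cond_excess w"
  and cond_shortfall_nonneg: "w \<in> {0..1} \<Longrightarrow> 0 \<le> cond_shortfall w"
  using fW_pos by (auto simp: cond_excess_def cond_shortfall_def less_imp_le)

lemma opT_eq_fW_cond_mean:
  assumes w: "w \<in> {0<..<1}"
  shows "opT f h w = fW f w * cond_mean w"
  using opT_eq_excess_shortfall[OF _ h_measurable opT_nn_excess_finite[OF w] opT_nn_shortfall_finite[OF w]]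
    fW_pos[of w] w
  by (simp add: cond_mean_def cond_excess_def cond_shortfall_def algebra_simps)

lemma cond_mean_mono:
  assumes w: "w \<in> {0<..<1}" "w' \<in> {0<..<1}" "w \<le> w'"
  shows "cond_mean w \<le> cond_mean w'"
proof -
  have "1 * cond_excess w \<le> cond_excess w'"
    unfolding cond_excess_def
    by (rule enn2real_div_le_of_ennreal_le)
      (use opT_nn_excess_mono[OF w] opT_nn_excess_finite fW_pos w in auto)
  moreover have "1 * cond_shortfall w' \<le> cond_shortfall w"
    unfolding cond_shortfall_def
    by (rule enn2real_div_le_of_ennreal_le)
      (use opT_nn_shortfall_antimono[OF w] opT_nn_shortfall_finite fW_pos w in auto)
  ultimately show ?thesis by (simp add: cond_mean_def)
qed

lemma cond_excess_gap: "C_F * cond_excess w1 \<le> cond_excess w2"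
  unfolding cond_excess_def
  by (rule enn2real_div_le_of_ennreal_le)
    (use opT_nn_excess_gap opT_nn_excess_finite fW_pos geometry C_F_gt_1 in auto)

lemma cond_shortfall_gap: "C_F * cond_shortfall w2 \<le> cond_shortfall w1"
  unfolding cond_shortfall_def
  by (rule enn2real_div_le_of_ennreal_le)
    (use opT_nn_shortfall_gap opT_nn_shortfall_finite fW_pos geometry C_F_gt_1 in auto)

text \<open>On \<open>(xt2, x2)\<close> the excess is at least \<open>h xt2 - h xt1\<close> and the conditional density
  at \<open>w2\<close> is at least \<open>c_f\<close>.\<close>
lemma cond_excess_w2_ge: "(h xt2 - h xt1) * (c_f * (x2 - xt2)) \<le> cond_excess w2"
proof -
  define d where "d = h xt2 - h xt1"
  have w2: "w2 \<in> {0..1}" "w2 \<in> {0<..<1}" using geometry by auto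
  have d: "0 \<le> d" unfolding d_def using mono_onD[OF h_mono, of xt1 xt2] geometry by auto
  have fW: "0 < fW f w2" using fW_pos[OF w2(1)] .
  have "ennreal (d * c_f * fW f w2 * (x2 - xt2))
      = (\<integral>\<^sup>+x. ennreal (d * c_f * fW f w2) * indicator {xt2<..<x2} x \<partial>lborel)"
    using geometry d c_f_pos fW by (simp add: nn_integral_cmult_indicator ennreal_mult)
  also have "\<dots> \<le> opT_nn (excess h xt1) w2"
    unfolding opT_nn_def
  proof (rule nn_integral_mono)
    fix x
    show "ennreal (d * c_f * fW f w2) * indicator {xt2<..<x2} x
        \<le> ennreal (excess h xt1 x) * (ennreal (f x w2) * indicator {0..1} x)"
    proof (cases "x \<in> {xt2<..<x2}")
      case True
      have "d \<le> excess h xt1 x"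
        using mono_onD[OF h_mono, of xt2 x] True geometry by (auto simp: d_def excess_def)
      moreover have "c_f * fW f w2 \<le> f x w2"
        using condDens_lower[of x w2] True geometry fW by (auto simp: condDens_def pos_le_divide_eq)
      ultimately have "d * (c_f * fW f w2) \<le> excess h xt1 x * f x w2"
        using d c_f_pos fW by (intro mult_mono) auto
      then show ?thesis
        using True geometry by (auto simp: ennreal_mult'[OF excess_nonneg, symmetric] ennreal_leI mult.assoc)
    qed simp
  qed
  also have "\<dots> = ennreal (enn2real (opT_nn (excess h xt1) w2))"
    using opT_nn_excess_finite[OF w2(2)] by simp
  finally have "d * c_f * fW f w2 * (x2 - xt2) \<le> enn2real (opT_nn (excess h xt1) w2)"
    by (simp add: ennreal_le_iff)
  then have "(h xt2 - h xt1) * (c_f * (x2 - xt2)) * fW f w2 \<le> enn2real (opT_nn (excess h xt1) w2)"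
    by (simp add: d_def algebra_simps)
  then show ?thesis
    using fW by (simp add: cond_excess_def pos_le_divide_eq)
qed

abbreviation extreme_mean :: real where
  "extreme_mean \<equiv> max (max 0 (cond_mean w2)) (max 0 (- cond_mean w1))"

lemma abs_h_le_extreme_mean:
  assumes x: "x \<in> {xt1..xt2}"
  shows "\<bar>h x\<bar> \<le> extreme_mean * level_const C_F (c_f * (x2 - xt2))"
proof -
  have w: "w1 \<in> {0..1}" "w2 \<in> {0..1}" using geometry by auto
  have "\<bar>h xt1\<bar> + (h xt2 - h xt1) \<le> extreme_mean * level_const C_F (c_f * (x2 - xt2))"
    unfolding cond_mean_def
  proof (rule abs_add_le_level_const[OF C_F_gt_1 _ cond_excess_nonneg[OF w(1)] cond_shortfall_nonneg[OF w(2)]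
        cond_excess_gap cond_shortfall_gap _ cond_excess_w2_ge])
    show "0 < c_f * (x2 - xt2)" "0 \<le> h xt2 - h xt1"
      using c_f_pos geometry mono_onD[OF h_mono, of xt1 xt2] by auto
  qed
  moreover have "h xt1 \<le> h x" "h x \<le> h xt2"
    using mono_onD[OF h_mono, of xt1 x] mono_onD[OF h_mono, of x xt2] x geometry by auto
  ultimately show ?thesis by linarith
qed

lemma c_W_mult_sq_le_opT_sq:
  assumes w: "w \<in> {0<..<1}" and t: "0 \<le> t" "t \<le> \<bar>cond_mean w\<bar>"
  shows "(c_W * t)\<^sup>2 \<le> (opT f h w)\<^sup>2"
proof -
  have "c_W * t \<le> fW f w * \<bar>cond_mean w\<bar>"
    using fW_lower[of w] w t c_W_pos by (intro mult_mono) auto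
  also have "\<dots> = \<bar>opT f h w\<bar>"
    using opT_eq_fW_cond_mean[OF w] fW_pos[of w] w by (simp add: abs_mult)
  finally show ?thesis
    using c_W_pos t by (metis power2_abs power_mono mult_nonneg_nonneg less_imp_le)
qed

text \<open>As \<open>cond_mean\<close> is increasing, \<open>|T h| \<ge> c_W * extreme_mean\<close> on \<open>(w2, 1)\<close> or on \<open>(0, w1)\<close>.\<close>
lemma norm2_opT_ge: "c_W * extreme_mean * sqrt (min w1 (1 - w2)) \<le> norm2 (opT f h)"
proof -
  define m where "m = min w1 (1 - w2)"
  have extreme_nonneg: "0 \<le> extreme_mean" by simp
  have "m * (c_W * extreme_mean)\<^sup>2 \<le> (LINT w:{0..1}|lborel. (opT f h w)\<^sup>2)"
  proof (cases "max 0 (- cond_mean w1) \<le> max 0 (cond_mean w2)")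
    case True
    have "(1 - w2) * (c_W * extreme_mean)\<^sup>2 \<le> (LINT w:{0..1}|lborel. (opT f h w)\<^sup>2)"
    proof (rule integral_opT_sq_ge)
      fix w assume w: "w \<in> {w2<..<1}"
      then have "cond_mean w2 \<le> cond_mean w"
        using geometry by (intro cond_mean_mono) auto
      then have "extreme_mean \<le> \<bar>cond_mean w\<bar>"
        using True by (simp add: max_def abs_if)
      then show "(c_W * extreme_mean)\<^sup>2 \<le> (opT f h w)\<^sup>2"
        using w geometry by (intro c_W_mult_sq_le_opT_sq extreme_nonneg) auto
    qed (use geometry in auto)
    moreover have "m * (c_W * extreme_mean)\<^sup>2 \<le> (1 - w2) * (c_W * extreme_mean)\<^sup>2"
      unfolding m_def by (intro mult_right_mono) auto
    ultimately show ?thesis by linarith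
  next
    case False
    have "(w1 - 0) * (c_W * extreme_mean)\<^sup>2 \<le> (LINT w:{0..1}|lborel. (opT f h w)\<^sup>2)"
    proof (rule integral_opT_sq_ge)
      fix w assume w: "w \<in> {0<..<w1}"
      then have "cond_mean w \<le> cond_mean w1"
        using geometry by (intro cond_mean_mono) auto
      then have "extreme_mean \<le> \<bar>cond_mean w\<bar>"
        using False by (simp add: max_def abs_if)
      then show "(c_W * extreme_mean)\<^sup>2 \<le> (opT f h w)\<^sup>2"
        using w geometry by (intro c_W_mult_sq_le_opT_sq extreme_nonneg) auto
    qed (use geometry in auto)
    moreover have "m * (c_W * extreme_mean)\<^sup>2 \<le> (w1 - 0) * (c_W * extreme_mean)\<^sup>2"
      unfolding m_def by (intro mult_right_mono) auto
    ultimately show ?thesis by linarith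
  qed
  then have "sqrt (m * (c_W * extreme_mean)\<^sup>2) \<le> norm2 (opT f h)"
    unfolding norm2_def by (rule real_sqrt_le_mono)
  moreover have "sqrt (m * (c_W * extreme_mean)\<^sup>2) = c_W * extreme_mean * sqrt m"
    using c_W_pos by (simp add: real_sqrt_mult)
  ultimately show ?thesis unfolding m_def by simp
qed

lemma norm2t_le_stability_const:
  "norm2t xt1 xt2 h \<le> stability_const C_F c_f c_W x2 xt1 xt2 w1 w2 * norm2 (opT f h)"
proof -
  define L where "L = level_const C_F (c_f * (x2 - xt2))"
  define s where "s = sqrt (min w1 (1 - w2))"
  have s: "0 < s" and L: "0 \<le> L"
    using geometry c_f_pos C_F_gt_1 unfolding s_def L_def level_const_def
    by (auto intro!: add_nonneg_nonneg mult_nonneg_nonneg)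
  have const: "stability_const C_F c_f c_W x2 xt1 xt2 w1 w2 = sqrt (xt2 - xt1) * L / (c_W * s)"
    unfolding stability_const_def L_def s_def ..
  have "norm2t xt1 xt2 h \<le> extreme_mean * L * sqrt (xt2 - xt1)"
    unfolding L_def
    by (rule norm2t_le_of_abs_le[OF _ set_integrable_subset[OF h_square_integrable] abs_h_le_extreme_mean])
      (use geometry in auto)
  also have "\<dots> = sqrt (xt2 - xt1) * L / (c_W * s) * (c_W * extreme_mean * s)"
    using s c_W_pos by simp
  also have "\<dots> \<le> sqrt (xt2 - xt1) * L / (c_W * s) * norm2 (opT f h)"
    using norm2_opT_ge s L c_W_pos geometry unfolding s_def[symmetric]
    by (intro mult_left_mono) auto
  finally show ?thesis unfolding const .
qed

end

lemma monotone_iv_model_of_assumptions: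
  assumes geometry: "0 \<le> x1" "x1 < xt1" "xt1 < xt2" "xt2 < x2" "x2 \<le> 1" "0 < w1" "w1 < w2" "w2 < 1"
    and iv: "monotone_IV f C_F x1 x2 w1 w2" and density: "density_assm f C_T c_f c_W C_W x1 x2 w1 w2"
    and h: "h \<in> L2_01" "mono_on {0<..<1} h"
  shows "monotone_iv_model f h C_F c_f c_W x1 x2 xt1 xt2 w1 w2"
proof -
  have c_W: "0 < c_W" and fW: "\<And>w. w \<in> {0..1} \<Longrightarrow> c_W \<le> fW f w"
    and f_sq: "(\<integral>\<^sup>+ z \<in> {0..1} \<times> {0..1}. ennreal ((case z of (x, w) \<Rightarrow> f x w)\<^sup>2) \<partial>(lborel \<Otimes>\<^sub>M lborel)) \<le> ennreal C_T"
    using density unfolding density_assm_def by blast+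
  show ?thesis
  proof unfold_locales
    show "(\<lambda>(x, w). f x w) \<in> borel_measurable (lborel \<Otimes>\<^sub>M lborel)"
      "\<And>x w. x \<in> {0..1} \<Longrightarrow> w \<in> {0..1} \<Longrightarrow> 0 \<le> f x w"
      "0 < c_f" "\<And>x w. x \<in> {x1..x2} \<Longrightarrow> w \<in> {w1, w2} \<Longrightarrow> c_f \<le> condDens f x w"
      using density unfolding density_assm_def by blast+
    show "\<And>w. w \<in> {0..1} \<Longrightarrow> 0 < fW f w"
      by (rule less_le_trans[OF c_W fW])
    show "(\<integral>\<^sup>+ z \<in> {0..1} \<times> {0..1}. ennreal ((case z of (x, w) \<Rightarrow> f x w)\<^sup>2) \<partial>(lborel \<Otimes>\<^sub>M lborel)) < \<infinity>"
      using le_less_trans[OF f_sq ennreal_less_top] by simp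
    show "h \<in> borel_measurable lborel" "set_integrable lborel {0..1} (\<lambda>x. (h x)\<^sup>2)"
      using h(1) unfolding L2_01_def by auto
    show "\<And>x w' w''. x \<in> {0<..<1} \<Longrightarrow> w' \<in> {0<..<1} \<Longrightarrow> w'' \<in> {0<..<1} \<Longrightarrow> w' \<le> w''
        \<Longrightarrow> condCDF f x w'' \<le> condCDF f x w'"
      "1 < C_F" "\<And>x. x \<in> {0<..<x2} \<Longrightarrow> C_F * condCDF f x w2 \<le> condCDF f x w1"
      "\<And>x. x \<in> {x1<..<1} \<Longrightarrow> C_F * (1 - condCDF f x w1) \<le> 1 - condCDF f x w2"
      using iv unfolding monotone_IV_def by blast+
  qed (fact c_W fW geometry h(2))+
qed

theorem theorem1:
  fixes c_f c_W C_F C_T w1 w2 x1 x2 xt1 xt2 :: real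
  assumes "0 \<le> x1" "x1 < xt1" "xt1 < xt2" "xt2 < x2" "x2 \<le> 1"
    and "0 < w1" "w1 < w2" "w2 < 1"
  shows "\<exists>Cbar::real. \<forall>(f :: real \<Rightarrow> real \<Rightarrow> real) (C_W::real).
           monotone_IV f C_F x1 x2 w1 w2 \<and> density_assm f C_T c_f c_W C_W x1 x2 w1 w2 \<longrightarrow>
           (\<forall>h\<in>monoL2. norm2t xt1 xt2 h \<le> Cbar * norm2 (opT f h))"
proof (intro exI allI impI ballI)
  fix f :: "real \<Rightarrow> real \<Rightarrow> real" and C_W :: real and h :: "real \<Rightarrow> real"
  assume "monotone_IV f C_F x1 x2 w1 w2 \<and> density_assm f C_T c_f c_W C_W x1 x2 w1 w2"
  then have bound: "norm2t xt1 xt2 g \<le> stability_const C_F c_f c_W x2 xt1 xt2 w1 w2 * norm2 (opT f g)"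
    if "g \<in> L2_01" "mono_on {0<..<1} g" for g
    using monotone_iv_model.norm2t_le_stability_const[OF monotone_iv_model_of_assumptions[OF assms _ _ that]]
    by blast
  assume "h \<in> monoL2"
  then have "h \<in> L2_01" "(\<lambda>x. - h x) \<in> L2_01"
    and "mono_on {0<..<1} h \<or> mono_on {0<..<1} (\<lambda>x. - h x)"
    by (auto simp: monoL2_def L2_01_def monotone_on_def)
  moreover have "norm2t xt1 xt2 (\<lambda>x. - h x) = norm2t xt1 xt2 h"
    and "norm2 (opT f (\<lambda>x. - h x)) = norm2 (opT f h)"
    by (simp_all add: norm2t_def norm2_def opT_def set_lebesgue_integral_def)
  ultimately show "norm2t xt1 xt2 h \<le> stability_const C_F c_f c_W x2 xt1 xt2 w1 w2 * norm2 (opT f h)"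
    using bound by metis
qed

end
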